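(* Let $(G;+)$ be a commutative groupoid and let $M, M'$ be multisets over $G$ with $|M| = |M'| \geq 5$. Then the deck of $M$ equals the deck of $M'$ if and only if $M = M'$. In particular, every multiset of cardinality at least $5$ over any commutative groupoid is reconstructible.
   Context: A (finite) multiset $M$ over a set $X$ is a function $\mathbf{1}_M \colon X \to \mathbb{N}$ with finite support; $|M| = \sum_x \mathbf{1}_M(x)$ is its cardinality. Multiset sum $\uplus$ adds multiplicities; the difference $M \setminus M'$ has multiplicities $\max(\mathbf{1}_M(x)-\mathbf{1}_{M'}(x),0)$. $\langle x_1,\dots,x_k\rangle$ denotes the multiset in which each element occurs as often as it appears in the list. A commutative groupoid is a set $G$ with a commutative binary operation $+$ (not necessarily associative). Cards and deck: for a multiset $M$ of cardinality $n \geq 2$ over $G$, fix $(m_1,\dots,m_n) \in G^n$ with $M = \langle m_1,\dots,m_n\rangle$; for $I = \{i,j\}$, $1 \le i<j \le n$, the card $M_I$ is $M \setminus \langle m_i, m_j\rangle \uplus \langle m_i + m_j\rangle$. The deck of $M$ is the multiset $\langle M_I : I \rangle$ of all $\binom{n}{2}$ cards (independent of the chosen tuple). $M$ is reconstructible if every multiset $M'$ over $G$ with the same deck equals $M$. *)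

theory Defs
  imports "HOL-Library.Multiset"
begin

definition comm_groupoid :: "('a \<Rightarrow> 'a \<Rightarrow> 'a) \<Rightarrow> bool" where
  "comm_groupoid f \<longleftrightarrow> (\<forall>x y. f x y = f y x)"

text \<open>Card of the tuple xs = (m_1,...,m_n) for I = {i,j} (0-based indices, i < j):
  remove m_i and m_j, add m_i + m_j.\<close>
definition card_of :: "('a \<Rightarrow> 'a \<Rightarrow> 'a) \<Rightarrow> 'a list \<Rightarrow> nat \<Rightarrow> nat \<Rightarrow> 'a multiset" where
  "card_of f xs i j = (mset xs - {# xs ! i, xs ! j #}) + {# f (xs ! i) (xs ! j) #}"

definition deck_list :: "('a \<Rightarrow> 'a \<Rightarrow> 'a) \<Rightarrow> 'a list \<Rightarrow> 'a multiset multiset" where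
  "deck_list f xs = image_mset (\<lambda>(i, j). card_of f xs i j)
      (mset [(i, j). i \<leftarrow> [0..<length xs], j \<leftarrow> [0..<length xs], i < j])"

definition deck :: "('a \<Rightarrow> 'a \<Rightarrow> 'a) \<Rightarrow> 'a multiset \<Rightarrow> 'a multiset multiset" where
  "deck f M = deck_list f (SOME xs. mset xs = M)"

end

theory Submission
  imports Defs
begin

text \<open>
  Adding up all the cards of the deck of M (|M| = n), each of the n entries of M is merged away
  in exactly n - 1 of the C(n,2) cards, and each pair sum occurs on exactly one card.  Hence the sum of
  the deck is K M + P, with K = C(n,2) - (n - 1) and P the multiset of the C(n,2) pair sums.
  If M and M' have the same deck, then K M + P = K M' + P'; for n \<ge> 5 we have |P| < 2K, so M and
  M' can differ in at most one element: M = R + x and M' = R + y with x \<noteq> y.  Comparing the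
  multiplicity of x, P' must contain K > n - 1 more copies of x than P, whereas P and P' differ
  only in the n - 1 sums x + r versus y + r for r in R.
\<close>

definition index_pairs :: "nat \<Rightarrow> (nat \<times> nat) set" where
  "index_pairs n = {(i, j). i < j \<and> j < n}"

lemma finite_index_pairs [simp]: "finite (index_pairs n)"
  by (rule finite_subset[of _ "{..<n} \<times> {..<n}"]) (auto simp: index_pairs_def)

lemma index_pairs_0 [simp]: "index_pairs 0 = {}"
  by (simp add: index_pairs_def)

lemma index_pairs_Suc:
  "index_pairs (Suc n) = (\<lambda>j. (0, Suc j)) ` {..<n} \<union> map_prod Suc Suc ` index_pairs n"
  by (auto simp: index_pairs_def image_iff gr0_conv_Suc less_Suc_eq_0_disj)

lemma sum_index_pairs_Suc:
  "(\<Sum>(i, j)\<in>index_pairs (Suc n). g i j) =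
     (\<Sum>j<n. g 0 (Suc j)) + (\<Sum>(i, j)\<in>index_pairs n. g (Suc i) (Suc j))"
proof -
  have "inj_on (\<lambda>j. (0::nat, Suc j)) {..<n}" "inj_on (map_prod Suc Suc) (index_pairs n)"
    by (auto simp: inj_on_def)
  moreover have "(\<lambda>j. (0, Suc j)) ` {..<n} \<inter> map_prod Suc Suc ` index_pairs n = {}"
    by auto
  ultimately show ?thesis
    unfolding index_pairs_Suc by (simp add: sum.union_disjoint sum.reindex split_def)
qed

lemma card_index_pairs: "card (index_pairs n) = n choose 2"
proof (induction n)
  case (Suc n)
  then show ?case
    using sum_index_pairs_Suc[of "\<lambda>_ _. 1::nat" n] by (simp add: numeral_2_eq_2)
qed simp

lemma mset_index_pair_list:
  "mset [(i, j). i \<leftarrow> [0..<n], j \<leftarrow> [0..<n], i < j] = mset_set (index_pairs n)"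
proof -
  have filter_product:
    "[(i, j). i \<leftarrow> is, j \<leftarrow> js, i < j] = filter (\<lambda>(i, j). i < j) (List.product is js)"
    for "is" js :: "nat list"
  proof (induction "is")
    case (Cons i "is")
    have "[(i, j). j \<leftarrow> js, i < j] = filter (\<lambda>(i, j). i < j) (map (Pair i) js)"
      by (induction js) auto
    with Cons show ?case by simp
  qed simp
  have "set (filter (\<lambda>(i, j). i < j) (List.product [0..<n] [0..<n])) = index_pairs n"
    by (auto simp: index_pairs_def)
  then show ?thesis
    unfolding filter_product by (metis distinct_filter distinct_product distinct_upt mset_set_set)
qed

lemma sum_constant_mset: "(\<Sum>_\<in>A. M) = repeat_mset (card A) M"
  by (rule multiset_eqI) (simp add: count_sum)

lemma sum_nth_singletons: "(\<Sum>j<length xs. {#xs ! j#}) = mset xs"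
  by (induction xs) (simp_all add: sum.lessThan_Suc_shift del: sum.lessThan_Suc)

fun pair_sums :: "('a \<Rightarrow> 'a \<Rightarrow> 'a) \<Rightarrow> 'a list \<Rightarrow> 'a multiset" where
  "pair_sums f [] = {#}"
| "pair_sums f (a # as) = image_mset (f a) (mset as) + pair_sums f as"

lemma pair_sums_conv_sum:
  "pair_sums f xs = (\<Sum>(i, j)\<in>index_pairs (length xs). {#f (xs ! i) (xs ! j)#})"
proof (induction xs)
  case (Cons a as)
  have "image_mset (f a) (mset as) = (\<Sum>j<length as. {#f a (as ! j)#})"
    using sum_nth_singletons[of "map (f a) as"] by simp
  with Cons show ?case by (simp add: sum_index_pairs_Suc)
qed simp

lemma size_pair_sums: "size (pair_sums f xs) = length xs choose 2"
  by (induction xs) (simp_all add: numeral_2_eq_2)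

lemma sum_index_pairs_endpoints:
  "(\<Sum>(i, j)\<in>index_pairs (length xs). {#xs ! i, xs ! j#}) = repeat_mset (length xs - 1) (mset xs)"
proof (induction xs)
  case (Cons a as)
  have "(\<Sum>j<length as. {#a, as ! j#}) = (\<Sum>j<length as. {#a#} + {#as ! j#})"
    by (simp add: add_mset_commute)
  also have "\<dots> = repeat_mset (length as) {#a#} + mset as"
    by (simp only: sum.distrib sum_constant_mset sum_nth_singletons card_lessThan)
  finally have "(\<Sum>j<length as. {#a, as ! j#}) = repeat_mset (length as) {#a#} + mset as" .
  with Cons show ?case
    by (cases as) (simp_all add: sum_index_pairs_Suc)
qed simp

lemma pair_sums_middle:
  assumes "comm_groupoid f"
  shows "pair_sums f (us @ a # vs) = image_mset (f a) (mset (us @ vs)) + pair_sums f (us @ vs)"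
proof (induction us)
  case (Cons u us)
  have "f u a = f a u"
    using assms by (simp add: comm_groupoid_def)
  with Cons show ?case by (simp add: ac_simps)
qed simp

lemma pair_sums_mset_eq:
  assumes "comm_groupoid f" and "mset xs = mset ys"
  shows "pair_sums f xs = pair_sums f ys"
  using assms(2)
proof (induction xs arbitrary: ys)
  case (Cons a as)
  then obtain us vs where ys: "ys = us @ a # vs"
    by (metis list.set_intros(1) set_mset_mset split_list)
  with Cons.prems have "mset as = mset (us @ vs)"
    by simp
  with Cons.IH show ?case
    unfolding ys pair_sums_middle[OF assms(1)] by simp
qed simp

lemma pair_nth_subseteq_mset:
  assumes "i < j" and "j < length xs"
  shows "{#xs ! i, xs ! j#} \<subseteq># mset xs"
proof -
  have "mset xs = add_mset (xs ! j) (mset (take j xs) + mset (drop (Suc j) xs))"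
    using id_take_nth_drop[OF assms(2)] by (metis mset.simps(2) mset_append union_mset_add_mset_right)
  moreover have "xs ! i \<in># mset (take j xs)"
    using assms by (auto simp: in_set_conv_nth)
  ultimately show ?thesis
    by (simp add: add_mset_commute[of "xs ! i"] mset_subset_eq_add_mset_cancel)
qed

lemma card_of_plus_pair:
  assumes "i < j" and "j < length xs"
  shows "card_of f xs i j + {#xs ! i, xs ! j#} = mset xs + {#f (xs ! i) (xs ! j)#}"
proof -
  let ?P = "{#xs ! i, xs ! j#}"
  have "card_of f xs i j + ?P = (mset xs - ?P + ?P) + {#f (xs ! i) (xs ! j)#}"
    unfolding card_of_def by (simp only: ac_simps)
  also have "mset xs - ?P + ?P = mset xs"
    using pair_nth_subseteq_mset[OF assms] by (rule subset_mset.diff_add)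
  finally show ?thesis .
qed

lemma sum_deck_list:
  "\<Sum>\<^sub># (deck_list f xs) + repeat_mset (length xs - 1) (mset xs) =
     repeat_mset (length xs choose 2) (mset xs) + pair_sums f xs"
proof -
  let ?P = "index_pairs (length xs)"
  have "\<Sum>\<^sub># (deck_list f xs) = (\<Sum>(i, j)\<in>?P. card_of f xs i j)"
    by (simp add: deck_list_def mset_index_pair_list sum_unfold_sum_mset)
  then have "\<Sum>\<^sub># (deck_list f xs) + repeat_mset (length xs - 1) (mset xs) =
      (\<Sum>(i, j)\<in>?P. card_of f xs i j) + (\<Sum>(i, j)\<in>?P. {#xs ! i, xs ! j#})"
    by (simp only: sum_index_pairs_endpoints)
  also have "\<dots> = (\<Sum>(i, j)\<in>?P. card_of f xs i j + {#xs ! i, xs ! j#})"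
    by (simp only: split_def sum.distrib)
  also have "\<dots> = (\<Sum>(i, j)\<in>?P. mset xs + {#f (xs ! i) (xs ! j)#})"
  proof (rule sum.cong)
    fix p
    assume "p \<in> ?P"
    then obtain i j where "p = (i, j)" and ij: "i < j" "j < length xs"
      by (auto simp: index_pairs_def)
    then show "(case p of (i, j) \<Rightarrow> card_of f xs i j + {#xs ! i, xs ! j#}) =
        (case p of (i, j) \<Rightarrow> mset xs + {#f (xs ! i) (xs ! j)#})"
      by (simp only: prod.case card_of_plus_pair[OF ij])
  qed simp
  also have "\<dots> = repeat_mset (length xs choose 2) (mset xs) + pair_sums f xs"
    by (simp only: split_def sum.distrib sum_constant_mset card_index_pairs pair_sums_conv_sum)
  finally show ?thesis .
qed

lemma pred_le_choose_two: "n - 1 \<le> n choose 2"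
  by (cases n) (simp_all add: numeral_2_eq_2)

lemma sum_deck:
  assumes "comm_groupoid f" and "mset xs = M"
  shows "\<Sum>\<^sub># (deck f M) = repeat_mset ((size M choose 2) - (size M - 1)) M + pair_sums f xs"
proof -
  define ys where "ys = (SOME ys. mset ys = M)"
  have ys: "mset ys = M"
    unfolding ys_def by (rule someI_ex) (rule ex_mset)
  then have "length ys = size M"
    by auto
  moreover have "pair_sums f ys = pair_sums f xs"
    using pair_sums_mset_eq[OF assms(1)] ys assms(2) by simp
  ultimately have "\<Sum>\<^sub># (deck f M) + repeat_mset (size M - 1) M =
      repeat_mset (size M choose 2) M + pair_sums f xs"
    using sum_deck_list[of f ys] unfolding deck_def ys_def[symmetric] ys by simp
  also have "repeat_mset (size M choose 2) M =
      repeat_mset ((size M choose 2) - (size M - 1)) M + repeat_mset (size M - 1) M"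
    by (simp only: le_add_diff_inverse2[OF pred_le_choose_two] flip: repeat_mset_distrib)
  finally have "\<Sum>\<^sub># (deck f M) + repeat_mset (size M - 1) M =
      (repeat_mset ((size M choose 2) - (size M - 1)) M + pair_sums f xs) + repeat_mset (size M - 1) M"
    by (simp only: ac_simps)
  then show ?thesis
    by (rule add_right_imp_eq)
qed

lemma repeat_mset_diff_subseteq:
  assumes "repeat_mset k M + S = repeat_mset k M' + S'"
  shows "repeat_mset k (M - M') \<subseteq># S'"
proof (rule mset_subset_eqI)
  fix z
  have "k * count M z + count S z = k * count M' z + count S' z"
    using arg_cong[OF assms, of "\<lambda>A. count A z"] by simp
  then show "count (repeat_mset k (M - M')) z \<le> count S' z"
    by (simp add: diff_mult_distrib2)
qed

lemma size_diff_le_one_if_repeat_mset_plus_eq: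
  assumes "repeat_mset k M + S = repeat_mset k M' + S'" and "size S' < 2 * k"
  shows "size (M - M') \<le> 1"
proof -
  have "k * size (M - M') \<le> size S'"
    using size_mset_mono[OF repeat_mset_diff_subseteq[OF assms(1)]] by simp
  with assms(2) have "k * size (M - M') < k * 2"
    by linarith
  then show ?thesis
    by simp
qed

lemma repeat_mset_plus_eqE:
  assumes eq: "repeat_mset k M + S = repeat_mset k M' + S'"
    and "size S < 2 * k" and "size S' < 2 * k"
    and "size M = size M'" and "M \<noteq> M'"
  obtains x y R where "x \<noteq> y" and "M = add_mset x R" and "M' = add_mset y R"
proof -
  have decomp: "M = (M - M') + M \<inter># M'" "M' = (M' - M) + M \<inter># M'"
    by (auto intro: multiset_eqI)
  have "size (M - M') = size (M' - M)"
    using assms(4) arg_cong[OF decomp(1), of size] arg_cong[OF decomp(2), of size]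
    unfolding size_union by linarith
  moreover have "size (M - M') \<noteq> 0"
  proof
    assume "size (M - M') = 0"
    with assms(5) have "M \<subset># M'"
      by (simp add: Diff_eq_empty_iff_mset subset_mset.le_less)
    with assms(4) show False
      using mset_subset_size by fastforce
  qed
  moreover have "size (M - M') \<le> 1" "size (M' - M) \<le> 1"
    using size_diff_le_one_if_repeat_mset_plus_eq[OF eq assms(3)]
      size_diff_le_one_if_repeat_mset_plus_eq[OF eq[symmetric] assms(2)] .
  ultimately have "size (M - M') = 1" and "size (M' - M) = 1"
    by linarith+
  then obtain x y where "M - M' = {#x#}" and "M' - M = {#y#}"
    by (meson size_1_singleton_mset)
  with decomp have "M = add_mset x (M \<inter># M')" and "M' = add_mset y (M \<inter># M')"
    by simp_all
  moreover from this have "x \<noteq> y"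
    using assms(5) by auto
  ultimately show ?thesis
    using that by blast
qed

lemma two_pred_less_choose_two:
  assumes "5 \<le> n"
  shows "2 * (n - 1) < n choose 2"
proof -
  have "5 * (n - 1) \<le> n * (n - 1)"
    using assms by (rule mult_le_mono1)
  moreover have "(2 * (n - 1) + 1) * 2 \<le> 5 * (n - 1)"
    using assms by simp
  ultimately have "(2 * (n - 1) + 1) * 2 \<le> n * (n - 1)"
    by (rule order_trans[rotated])
  then show ?thesis
    by (simp add: choose_two less_eq_div_iff_mult_less_eq)
qed

lemma count_pair_sums_swap_le:
  assumes "comm_groupoid f" and "mset xs = add_mset x R" and "mset ys = add_mset y R"
  shows "count (pair_sums f ys) z \<le> size R + count (pair_sums f xs) z"
proof -
  obtain rs where rs: "mset rs = R"
    by (metis ex_mset)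
  have "pair_sums f xs = image_mset (f x) R + pair_sums f rs"
    using pair_sums_mset_eq[OF assms(1), of xs "x # rs"] assms(2) rs by simp
  moreover have "pair_sums f ys = image_mset (f y) R + pair_sums f rs"
    using pair_sums_mset_eq[OF assms(1), of ys "y # rs"] assms(3) rs by simp
  ultimately show ?thesis
    using count_le_size[of "image_mset (f y) R" z] by simp
qed

theorem mainTheorem3:
  fixes f :: "'a \<Rightarrow> 'a \<Rightarrow> 'a" and M M' :: "'a multiset"
  assumes "comm_groupoid f"
    and "size M = size M'"
    and "size M \<ge> 5"
  shows "deck f M = deck f M' \<longleftrightarrow> M = M'"
proof
  assume decks: "deck f M = deck f M'"
  obtain xs ys where xs: "mset xs = M" and ys: "mset ys = M'"
    by (metis ex_mset)
  define n where "n = size M"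
  define N where "N = n choose 2"
  define K where "K = N - (n - 1)"
  have "2 * (n - 1) < N"
    using assms(3) unfolding n_def N_def by (rule two_pred_less_choose_two)
  then have "N < 2 * K" and "n - 1 < K"
    unfolding K_def by linarith+
  then have small: "size (pair_sums f xs) < 2 * K" "size (pair_sums f ys) < 2 * K"
    using xs ys assms(2) by (auto simp: size_pair_sums n_def N_def)
  have "repeat_mset K M + pair_sums f xs = \<Sum>\<^sub># (deck f M)"
    using sum_deck[OF assms(1) xs] by (simp add: K_def N_def n_def)
  also have "\<dots> = repeat_mset K M' + pair_sums f ys"
    using sum_deck[OF assms(1) ys] decks assms(2) by (simp add: K_def N_def n_def)
  finally have eq: "repeat_mset K M + pair_sums f xs = repeat_mset K M' + pair_sums f ys" .
  show "M = M'"
  proof (rule ccontr)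
    assume "M \<noteq> M'"
    then obtain x y R where "x \<noteq> y" and M: "M = add_mset x R" and M': "M' = add_mset y R"
      using repeat_mset_plus_eqE[OF eq small assms(2)] by blast
    have "K + count (pair_sums f xs) x = count (pair_sums f ys) x"
      using arg_cong[OF eq, of "\<lambda>A. count A x"] M M' \<open>x \<noteq> y\<close> by simp
    also have "\<dots> \<le> (n - 1) + count (pair_sums f xs) x"
      using count_pair_sums_swap_le[OF assms(1), of xs x R ys y x] xs ys M M' n_def by simp
    finally show False
      using \<open>n - 1 < K\<close> by linarith
  qed
qed simp

end
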